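(* Let $\theta$ be an irrational number whose best rational approximants $(p_n/q_n)_{n\ge0}$ satisfy $q_n^{-1}\log q_{n+1}\to\infty$ as $n\to\infty$. For any subsequence $q'$ of $(q_n)_{n\ge0}$ and any $z\in\mathbb{C}$ with $|z|>1$, there exists a dense $G_\delta$-subset $E(z)$ of $l^\infty$ such that for every $u\in E(z)$, \[\sup_{N\in\mathbb{N}}|\varphi'_{N\theta,q',u}(z)|=+\infty,\] where $\varphi'_{N\theta,q',u}$ denotes the complex derivative of the entire function $\varphi_{N\theta,q',u}$.
   Context: Best rational approximants $p_n/q_n$ of an irrational $\theta$ are its continued fraction convergents, with $\gcd(p_n,q_n)=1$, $q_n\ge0$. A subsequence $q'$ of $(q_n)$ means $q'_n=q_{k_n}$ with $k_n$ strictly increasing. $l^\infty$ is the complex Banach space of bounded complex sequences $u=(u_m)_{m\ge0}$ with the sup norm. For $\mu\in\mathbb{R}$, $\varphi_{\mu,q',u}(z)=z e^{2\pi i\mu}\sum_{n=0}^\infty u_{q'_n}(1-e^{2\pi i q'_n\mu})z^{q'_n}$, where $u_{q'_n}$ is the $q'_n$-th term of $u$; under the growth hypothesis on $(q_n)$, $\varphi_{N\theta,q',u}$ is entire for every integer $N\ge0$. *)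

theory Defs
  imports "HOL-Analysis.Analysis"
begin

fun cf_rem :: "real \<Rightarrow> nat \<Rightarrow> real" where
  "cf_rem x 0 = x"
| "cf_rem x (Suc n) = 1 / frac (cf_rem x n)"

definition cf_a :: "real \<Rightarrow> nat \<Rightarrow> int" where
  "cf_a x n = \<lfloor>cf_rem x n\<rfloor>"

(* Denominators of the convergents p_n/q_n: q_{-1} = 0, q_0 = 1,
  q_{n+1} = a_{n+1} q_n + q_{n-1}. The function below returns (q_n, q_{n-1}). *)
fun cf_qpair :: "real \<Rightarrow> nat \<Rightarrow> int \<times> int" where
  "cf_qpair x 0 = (1, 0)"
| "cf_qpair x (Suc n) = (let (q, q') = cf_qpair x n in (cf_a x (Suc n) * q + q', q))"

definition cf_q :: "real \<Rightarrow> nat \<Rightarrow> nat" where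
  "cf_q x n = nat (fst (cf_qpair x n))"

(* l^\<infinity> is modelled as the Banach space of bounded (continuous) functions
  nat \<Rightarrow>_C complex on the discrete space nat, with the sup norm. *)
type_synonym linfty = "nat \<Rightarrow>\<^sub>C complex"

definition phi :: "real \<Rightarrow> (nat \<Rightarrow> nat) \<Rightarrow> linfty \<Rightarrow> complex \<Rightarrow> complex" where
  "phi \<mu> q' u z = z * cis (2 * pi * \<mu>) *
     (\<Sum>n. apply_bcontfun u (q' n) * (1 - cis (2 * pi * real (q' n) * \<mu>)) * z ^ (q' n))"

end

theory Submission
  imports Defs
begin

(* For fixed N, termwise differentiation gives
     phi'_{N theta,q',u}(z) = e^{2 pi i N theta} * sum_n u(q'_n) (1 - e^{2 pi i q'_n N theta}) (q'_n + 1) z^{q'_n}.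
   Since q_n theta is within 1/q_{n+1} of an integer, |1 - e^{2 pi i q'_n N theta}| <= 2 pi N / q_{k_n + 1},
   and the growth hypothesis makes this beat (q'_n + 1) |z|^{q'_n}: the coefficients are summable, so each
   functional u |-> phi'_{N theta,q',u}(z) is bounded linear on l^infty.  On the unit vector at q'_m it has
   modulus |1 - e^{2 pi i q'_m N theta}| (q'_m + 1) |z|^{q'_m}, and since q'_m theta is irrational some N
   makes the first factor at least 1.  So the functionals are not uniformly bounded on the unit ball, and
   the Baire category theorem (resonance principle) gives a dense G_delta set of u on which they are
   unbounded. *)

lemma frac_not_Rats: "x \<notin> \<rat> \<Longrightarrow> frac x \<notin> \<rat>"
proof
  assume "x \<notin> \<rat>" "frac x \<in> \<rat>"
  then have "frac x + of_int \<lfloor>x\<rfloor> \<in> \<rat>" by (simp add: Rats_add)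
  with \<open>x \<notin> \<rat>\<close> show False by (simp add: frac_def)
qed

lemma cf_rem_not_Rats: "\<theta> \<notin> \<rat> \<Longrightarrow> cf_rem \<theta> n \<notin> \<rat>"
  by (induction n) (simp_all add: cf_rem.simps divide_inverse frac_not_Rats)

lemma frac_cf_rem_pos: "\<theta> \<notin> \<rat> \<Longrightarrow> 0 < frac (cf_rem \<theta> n)"
  using cf_rem_not_Rats Ints_subset_Rats by (auto simp: frac_gt_0_iff)

lemma cf_rem_Suc_gt_1: "\<theta> \<notin> \<rat> \<Longrightarrow> 1 < cf_rem \<theta> (Suc n)"
  using frac_cf_rem_pos[of \<theta> n] frac_lt_1[of "cf_rem \<theta> n"] by (simp add: less_divide_eq)

declare cf_rem.simps(2) [simp del]

lemma cf_a_Suc_ge_1: "\<theta> \<notin> \<rat> \<Longrightarrow> 1 \<le> cf_a \<theta> (Suc n)"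
  using cf_rem_Suc_gt_1[of \<theta> n] unfolding cf_a_def by (simp add: le_floor_iff)

lemma cf_qpair_Suc [simp]:
  "cf_qpair x (Suc n) =
     (cf_a x (Suc n) * fst (cf_qpair x n) + snd (cf_qpair x n), fst (cf_qpair x n))"
  by (simp add: split_def Let_def)

declare cf_qpair.simps(2) [simp del]

lemma cf_qpair_ge:
  assumes "\<theta> \<notin> \<rat>"
  shows "max 1 (int n) \<le> fst (cf_qpair \<theta> n) \<and> min 1 (int n) \<le> snd (cf_qpair \<theta> n)"
proof (induction n)
  case (Suc n)
  obtain q q' where qq: "cf_qpair \<theta> n = (q, q')" by fastforce
  with Suc have IH: "max 1 (int n) \<le> q" "min 1 (int n) \<le> q'" by simp_all
  have "q \<le> cf_a \<theta> (Suc n) * q"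
    using cf_a_Suc_ge_1[OF assms, of n] IH by simp
  moreover have "1 + int n \<le> q + q'" using IH by (cases n) auto
  moreover have "max 1 (int (Suc n)) = 1 + int n" "min 1 (int (Suc n)) = 1" by auto
  ultimately show ?case using IH by (simp only: cf_qpair_Suc qq fst_conv snd_conv) linarith
qed simp

lemma of_nat_cf_q: "\<theta> \<notin> \<rat> \<Longrightarrow> of_nat (cf_q \<theta> n) = of_int (fst (cf_qpair \<theta> n))"
  using cf_qpair_ge[of \<theta> n] unfolding cf_q_def by simp

lemma cf_q_ge: "\<theta> \<notin> \<rat> \<Longrightarrow> n \<le> cf_q \<theta> n"
  and cf_q_pos: "\<theta> \<notin> \<rat> \<Longrightarrow> 1 \<le> cf_q \<theta> n"
  using cf_qpair_ge[of \<theta> n] unfolding cf_q_def by linarith+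

lemma cf_q_0 [simp]: "cf_q \<theta> 0 = 1"
  by (simp add: cf_q_def)

lemma cf_q_less_Suc:
  assumes "\<theta> \<notin> \<rat>" "1 \<le> n"
  shows "cf_q \<theta> n < cf_q \<theta> (Suc n)"
proof -
  obtain q q' where qq: "cf_qpair \<theta> n = (q, q')" by fastforce
  then have "1 \<le> q" "1 \<le> q'" using cf_qpair_ge[OF assms(1), of n] assms(2) by auto
  moreover have "q \<le> cf_a \<theta> (Suc n) * q"
    using cf_a_Suc_ge_1[OF assms(1), of n] \<open>1 \<le> q\<close> by simp
  ultimately have "q < cf_a \<theta> (Suc n) * q + q'" by linarith
  with \<open>1 \<le> q\<close> show ?thesis unfolding cf_q_def by (simp add: qq)
qed

lemma cf_q_less: "\<theta> \<notin> \<rat> \<Longrightarrow> 1 \<le> i \<Longrightarrow> i < j \<Longrightarrow> cf_q \<theta> i < cf_q \<theta> j"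
proof (induction j)
  case (Suc j)
  then show ?case
    using cf_q_less_Suc[of \<theta> j] by (cases "i = j") (auto simp: less_Suc_eq)
qed simp

lemma cf_q_strict_mono_on: "\<theta> \<notin> \<rat> \<Longrightarrow> strict_mono_on {1..} (cf_q \<theta>)"
  by (rule strict_mono_onI) (simp add: cf_q_less)

(* The bound 2 <= j is needed since q_0 = q_1 = 1 when a_1 = 1. *)

lemma cf_q_inj:
  assumes "\<theta> \<notin> \<rat>" "2 \<le> j" "cf_q \<theta> i = cf_q \<theta> j"
  shows "i = j"
proof -
  have "cf_q \<theta> 0 < cf_q \<theta> j"
    using cf_q_pos[OF assms(1), of 1] strict_mono_onD[OF cf_q_strict_mono_on[OF assms(1)], of 1 j] assms(2)
    by simp
  then have "i \<noteq> 0" using assms(3) by (metis less_irrefl)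
  then show ?thesis
    using strict_mono_on_imp_inj_on[OF cf_q_strict_mono_on[OF assms(1)]] assms
    by (auto dest: inj_onD)
qed

(* cf_errpair x n = (q_n x - p_n, q_{n-1} x - p_{n-1}) with p_{-1} = 1, q_{-1} = 0; it obeys the
   same recursion as cf_qpair. *)

fun cf_errpair :: "real \<Rightarrow> nat \<Rightarrow> real \<times> real" where
  "cf_errpair x 0 = (x - of_int (cf_a x 0), -1)"
| "cf_errpair x (Suc n) =
     (of_int (cf_a x (Suc n)) * fst (cf_errpair x n) + snd (cf_errpair x n), fst (cf_errpair x n))"

lemma cf_errpair_in_Ints:
  "fst (cf_errpair \<theta> n) - of_int (fst (cf_qpair \<theta> n)) * \<theta> \<in> \<int> \<and>
   snd (cf_errpair \<theta> n) - of_int (snd (cf_qpair \<theta> n)) * \<theta> \<in> \<int>"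
proof (induction n)
  case (Suc n)
  let ?e = "fst (cf_errpair \<theta> n)" and ?e' = "snd (cf_errpair \<theta> n)"
  let ?q = "fst (cf_qpair \<theta> n)" and ?q' = "snd (cf_qpair \<theta> n)"
  have "fst (cf_errpair \<theta> (Suc n)) - of_int (fst (cf_qpair \<theta> (Suc n))) * \<theta>
      = of_int (cf_a \<theta> (Suc n)) * (?e - of_int ?q * \<theta>) + (?e' - of_int ?q' * \<theta>)"
    by (simp add: algebra_simps)
  also have "\<dots> \<in> \<int>" using Suc by (intro Ints_add Ints_mult) auto
  finally show ?case using Suc by simp
qed simp

lemma cf_errpair_cf_rem:
  assumes "\<theta> \<notin> \<rat>"
  shows "snd (cf_errpair \<theta> n) = - cf_rem \<theta> (Suc n) * fst (cf_errpair \<theta> n) \<and>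
    \<bar>fst (cf_errpair \<theta> n)\<bar> *
      (of_int (fst (cf_qpair \<theta> n)) * cf_rem \<theta> (Suc n) + of_int (snd (cf_qpair \<theta> n))) = 1"
proof (induction n)
  case 0
  have "0 < frac \<theta>" using frac_cf_rem_pos[OF assms, of 0] by simp
  moreover have "\<theta> - of_int (cf_a \<theta> 0) = frac \<theta>" by (simp add: cf_a_def frac_def)
  ultimately show ?case by (simp add: cf_rem.simps)
next
  case (Suc n)
  let ?e = "fst (cf_errpair \<theta> n)"
  let ?q = "fst (cf_qpair \<theta> n)" and ?q' = "snd (cf_qpair \<theta> n)"
  let ?a = "cf_a \<theta> (Suc n)" and ?x = "cf_rem \<theta> (Suc n)"
  have pos: "0 < frac ?x" by (rule frac_cf_rem_pos[OF assms])
  have frac_x: "frac ?x = ?x - of_int ?a" by (simp add: cf_a_def frac_def)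
  have x_Suc: "cf_rem \<theta> (Suc (Suc n)) = 1 / frac ?x" by (simp add: cf_rem.simps)
  have e_Suc: "fst (cf_errpair \<theta> (Suc n)) = - frac ?x * ?e"
    using Suc by (simp add: frac_x algebra_simps)
  have "\<bar>fst (cf_errpair \<theta> (Suc n))\<bar> *
      (of_int (fst (cf_qpair \<theta> (Suc n))) * cf_rem \<theta> (Suc (Suc n)) + of_int (snd (cf_qpair \<theta> (Suc n))))
      = \<bar>?e\<bar> * (of_int ?a * of_int ?q + of_int ?q' + of_int ?q * frac ?x)"
    using pos by (simp only: e_Suc x_Suc cf_qpair_Suc fst_conv snd_conv) (simp add: abs_mult field_simps)
  also have "\<dots> = \<bar>?e\<bar> * (of_int ?q * ?x + of_int ?q')" by (simp add: frac_x algebra_simps)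
  also have "\<dots> = 1" using Suc by simp
  finally have "\<bar>fst (cf_errpair \<theta> (Suc n))\<bar> *
      (of_int (fst (cf_qpair \<theta> (Suc n))) * cf_rem \<theta> (Suc (Suc n)) + of_int (snd (cf_qpair \<theta> (Suc n))))
      = 1" .
  moreover have "snd (cf_errpair \<theta> (Suc n)) = - cf_rem \<theta> (Suc (Suc n)) * fst (cf_errpair \<theta> (Suc n))"
    using pos by (simp only: e_Suc x_Suc) simp
  ultimately show ?case by simp
qed

lemma cf_q_approx:
  assumes "\<theta> \<notin> \<rat>"
  shows "\<exists>p::int. \<bar>real (cf_q \<theta> n) * \<theta> - of_int p\<bar> \<le> 1 / real (cf_q \<theta> (Suc n))"
proof -
  let ?e = "fst (cf_errpair \<theta> n)"
  let ?q = "fst (cf_qpair \<theta> n)" and ?q' = "snd (cf_qpair \<theta> n)"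
  let ?a = "cf_a \<theta> (Suc n)" and ?x = "cf_rem \<theta> (Suc n)"
  obtain m where m: "?e - of_int ?q * \<theta> = of_int m"
    using cf_errpair_in_Ints[of \<theta> n] by (auto elim!: Ints_cases)
  have inv: "\<bar>?e\<bar> * (of_int ?q * ?x + of_int ?q') = 1"
    using cf_errpair_cf_rem[OF assms] by blast
  have "real (cf_q \<theta> (Suc n)) = of_int ?a * of_int ?q + of_int ?q'"
    by (simp add: of_nat_cf_q[OF assms])
  also have "\<dots> \<le> of_int ?q * ?x + of_int ?q'"
    using cf_qpair_ge[OF assms, of n] by (simp add: cf_a_def mult.commute mult_left_mono)
  finally have "\<bar>?e\<bar> * real (cf_q \<theta> (Suc n)) \<le> 1"
    using inv mult_left_mono[of _ _ "\<bar>?e\<bar>"] by fastforce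
  then have "\<bar>?e\<bar> \<le> 1 / real (cf_q \<theta> (Suc n))"
    using cf_q_pos[OF assms, of "Suc n"] by (simp add: field_simps)
  moreover have "real (cf_q \<theta> n) * \<theta> - of_int (- m) = ?e"
    using m by (simp add: of_nat_cf_q[OF assms])
  ultimately show ?thesis by metis
qed

lemma norm_one_minus_cis: "norm (1 - cis x) = 2 * \<bar>sin (x / 2)\<bar>"
proof -
  have "1 - cis x = cis (x / 2) * (- 2 * \<i> * complex_of_real (sin (x / 2)))"
    using cos_double_sin[of "x / 2"] sin_double[of "x / 2"]
    by (simp add: complex_eq_iff algebra_simps power2_eq_square)
  then show ?thesis by (simp add: norm_mult)
qed

lemma norm_one_minus_cis_le: "norm (1 - cis x) \<le> \<bar>x\<bar>"
  using abs_sin_x_le_abs_x[of "x / 2"] by (simp add: norm_one_minus_cis)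

lemma cis_2pi_add_Ints: "m \<in> \<int> \<Longrightarrow> cis (2 * pi * (m + y)) = cis (2 * pi * y)"
proof -
  assume "m \<in> \<int>"
  then have "cis (2 * pi * m) = 1" by simp
  moreover have "cis (2 * pi * (m + y)) = cis (2 * pi * m) * cis (2 * pi * y)"
    by (simp add: cis_mult algebra_simps)
  ultimately show ?thesis by simp
qed

lemma multiple_in_sixth_to_half:
  fixes a :: real
  assumes "0 < a" "a \<le> 1 / 2"
  shows "\<exists>N::nat. 1 / 6 \<le> real N * a \<and> real N * a \<le> 1 / 2"
proof (cases "1 / 6 \<le> a")
  case True
  with assms show ?thesis by (intro exI[of _ 1]) simp
next
  case False
  define N where "N = nat \<lceil>1 / (6 * a)\<rceil>"
  have "real N = of_int \<lceil>1 / (6 * a)\<rceil>"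
    using assms by (simp add: N_def)
  then have "1 / (6 * a) \<le> real N" "real N < 1 / (6 * a) + 1"
    by linarith+
  then have "1 / 6 \<le> real N * a" "real N * a < 1 / 6 + a"
    using assms by (simp_all add: field_simps)
  with False show ?thesis by auto
qed

(* norm (1 - cis phi) >= 1 says that phi is at distance at least pi/3 from 2 pi Z; it suffices to
   choose N with N frac x in [1/6, 1/2] (or the same for -x). *)

lemma exists_multiple_norm_one_minus_cis_ge:
  fixes x :: real
  assumes "x \<notin> \<int>"
  shows "\<exists>N::nat. 1 \<le> norm (1 - cis (2 * pi * (real N * x)))"
proof -
  have key: "\<exists>N::nat. 1 \<le> norm (1 - cis (2 * pi * (real N * y)))"
    if y: "0 < frac y" "frac y \<le> 1 / 2" for y
  proof -
    obtain N :: nat where N: "1 / 6 \<le> real N * frac y" "real N * frac y \<le> 1 / 2"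
      using multiple_in_sixth_to_half[OF y] by blast
    have "real N * y = of_int (int N * \<lfloor>y\<rfloor>) + real N * frac y"
      by (simp add: frac_def algebra_simps)
    then have "norm (1 - cis (2 * pi * (real N * y))) = 2 * \<bar>sin (pi * (real N * frac y))\<bar>"
      using cis_2pi_add_Ints[of "of_int (int N * \<lfloor>y\<rfloor>)"] by (simp add: norm_one_minus_cis)
    moreover have "sin (pi / 6) \<le> sin (pi * (real N * frac y))"
      using N by (intro sin_monotone_2pi_le) (auto simp: field_simps)
    ultimately have "1 \<le> norm (1 - cis (2 * pi * (real N * y)))" by (simp add: sin_30)
    then show ?thesis ..
  qed
  show ?thesis
  proof (cases "frac x \<le> 1 / 2")
    case True
    with assms key show ?thesis by simp
  next
    case False
    then have "0 < frac (- x)" "frac (- x) \<le> 1 / 2"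
      using assms frac_lt_1[of x] by (auto simp: frac_neg)
    then obtain N :: nat where "1 \<le> norm (1 - cis (2 * pi * (real N * - x)))"
      using key by blast
    then show ?thesis by (auto simp: norm_one_minus_cis)
  qed
qed

lemma complete_UNIV_bcontfun:
  "complete (UNIV :: ('a::topological_space \<Rightarrow>\<^sub>C 'b::{metric_space, complete_space}) set)"
  unfolding complete_def
proof (intro allI impI)
  fix f :: "nat \<Rightarrow> 'a \<Rightarrow>\<^sub>C 'b"
  assume "(\<forall>n. f n \<in> UNIV) \<and> Cauchy f"
  then have "\<forall>e>0. \<exists>N. \<forall>m n x. N \<le> m \<and> N \<le> n \<and> True \<longrightarrow> dist (f m x) (f n x) < e"
    unfolding Cauchy_def by (meson dist_bounded le_less_trans)
  then obtain l where "\<forall>e>0. \<exists>N. \<forall>n x. N \<le> n \<and> True \<longrightarrow> dist (f n x) (l x) < e"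
    using uniformly_convergent_eq_cauchy[of "\<lambda>_. True" "\<lambda>n. apply_bcontfun (f n)"] by blast
  then have "uniform_limit UNIV f l sequentially"
    unfolding uniform_limit_sequentially_iff by simp
  then obtain l' where "f \<longlonglongrightarrow> l'"
    by (rule uniform_limit_bcontfunE[OF _ sequentially_bot])
  then show "\<exists>l\<in>UNIV. f \<longlonglongrightarrow> l" by blast
qed

lemma bounded_linear_sequence_unbounded_dense_gdelta:
  fixes f :: "nat \<Rightarrow> 'a::real_normed_vector \<Rightarrow> 'b::real_normed_vector"
  assumes complete: "complete (UNIV :: 'a set)"
    and lin: "\<And>N. bounded_linear (f N)"
    and unbounded: "\<And>T. \<exists>N x. norm x \<le> 1 \<and> T < norm (f N x)"
  defines "E \<equiv> {u. \<forall>B. \<exists>N. B < norm (f N u)}"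
  shows "gdelta_in euclidean E \<and> closure E = UNIV"
proof -
  define G where "G M = (\<Union>N. {u. real M < norm (f N u)})" for M :: nat
  have E_eq: "E = \<Inter> (range G)"
    unfolding E_def G_def by (auto, meson reals_Archimedean2 less_trans)
  have open_G: "open (G M)" for M
    unfolding G_def using lin
    by (intro open_UN ballI open_Collect_less continuous_intros) (simp add: linear_continuous_on)
  have dense_G: "closure (G M) = UNIV" for M
  proof -
    have "\<exists>v\<in>G M. dist v u < \<epsilon>" if "0 < \<epsilon>" for u and \<epsilon> :: real
    proof -
      define \<delta> where "\<delta> = \<epsilon> / 2"
      have \<delta>: "0 < \<delta>" "\<delta> < \<epsilon>" unfolding \<delta>_def using that by auto
      obtain N x where x: "norm x \<le> 1" "real M / \<delta> < norm (f N x)"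
        using unbounded by blast
      (* the images of u + delta x and u - delta x differ by 2 delta f N x, so one of them is large *)
      interpret bounded_linear "f N" by (rule lin)
      have "f N (u + \<delta> *\<^sub>R x) - f N (u - \<delta> *\<^sub>R x) = (2 * \<delta>) *\<^sub>R f N x"
        by (simp add: add diff scaleR flip: scaleR_right.add) (metis scaleR_2 scaleR_scaleR mult.commute)
      then have "2 * real M < norm (f N (u + \<delta> *\<^sub>R x) - f N (u - \<delta> *\<^sub>R x))"
        using x(2) \<delta> by (simp add: pos_divide_less_eq mult.commute)
      also have "\<dots> \<le> norm (f N (u + \<delta> *\<^sub>R x)) + norm (f N (u - \<delta> *\<^sub>R x))"
        by (rule norm_triangle_ineq4)
      finally have "real M < norm (f N (u + \<delta> *\<^sub>R x)) \<or> real M < norm (f N (u - \<delta> *\<^sub>R x))"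
        by linarith
      then have "u + \<delta> *\<^sub>R x \<in> G M \<or> u - \<delta> *\<^sub>R x \<in> G M"
        unfolding G_def by blast
      moreover have "\<delta> * norm x < \<epsilon>"
        using x(1) \<delta> mult_left_le[of "norm x" \<delta>] by linarith
      then have "dist (u + \<delta> *\<^sub>R x) u < \<epsilon>" "dist (u - \<delta> *\<^sub>R x) u < \<epsilon>"
        using \<delta> by (simp_all add: dist_norm)
      ultimately show ?thesis by blast
    qed
    then show ?thesis by (auto simp: closure_approachable)
  qed
  have "gdelta_in euclidean E"
    unfolding E_eq by (intro gdelta_in_Inter open_imp_gdelta_in) (auto simp: open_G)
  moreover have "euclidean closure_of \<Inter> (range G) = topspace euclidean"
    using Met_TC.completely_metrizable_space_mtopology complete
    by (intro Baire_category) (auto simp: open_G dense_G)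
  ultimately show ?thesis by (simp add: E_eq)
qed

definition unit_bcontfun :: "nat \<Rightarrow> nat \<Rightarrow>\<^sub>C complex" where
  "unit_bcontfun i = Bcontfun (\<lambda>j. if j = i then 1 else 0)"

lemma apply_unit_bcontfun [simp]: "apply_bcontfun (unit_bcontfun i) j = (if j = i then 1 else 0)"
proof -
  have "(\<lambda>j. if j = i then 1 else 0 :: complex) \<in> bcontfun"
    by (rule bcontfun_normI[of _ 1]) auto
  then show ?thesis by (simp add: unit_bcontfun_def Bcontfun_inverse)
qed

lemma norm_unit_bcontfun_le: "norm (unit_bcontfun i) \<le> 1"
  by (rule norm_bound) simp

lemma bounded_linear_bcontfun_suminf:
  fixes b :: "nat \<Rightarrow> complex" and Q :: "nat \<Rightarrow> nat"
  assumes b: "summable (\<lambda>n. norm (b n))"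
  shows "bounded_linear (\<lambda>u::nat \<Rightarrow>\<^sub>C complex. \<Sum>n. apply_bcontfun u (Q n) * b n)"
proof -
  have bound: "norm (apply_bcontfun u (Q n) * b n) \<le> norm u * norm (b n)" for u n
    by (simp add: norm_mult mult_right_mono norm_bounded)
  have norm_summable: "summable (\<lambda>n. norm (apply_bcontfun u (Q n) * b n))" for u
    by (rule summable_comparison_test[OF _ summable_mult[OF b]]) (use bound in auto)
  then have summable: "summable (\<lambda>n. apply_bcontfun u (Q n) * b n)" for u
    by (rule summable_norm_cancel)
  show ?thesis
  proof (rule bounded_linear_intro)
    show "(\<Sum>n. apply_bcontfun (u + v) (Q n) * b n)
        = (\<Sum>n. apply_bcontfun u (Q n) * b n) + (\<Sum>n. apply_bcontfun v (Q n) * b n)" for u v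
      using suminf_add[OF summable summable] by (simp add: distrib_right)
    show "(\<Sum>n. apply_bcontfun (r *\<^sub>R u) (Q n) * b n) = r *\<^sub>R (\<Sum>n. apply_bcontfun u (Q n) * b n)"
      for r u
      using suminf_mult[OF summable, of "of_real r"] by (simp add: scaleR_conv_of_real mult.assoc)
    show "norm (\<Sum>n. apply_bcontfun u (Q n) * b n) \<le> norm u * (\<Sum>n. norm (b n))" for u
    proof -
      have "norm (\<Sum>n. apply_bcontfun u (Q n) * b n) \<le> (\<Sum>n. norm (apply_bcontfun u (Q n) * b n))"
        by (rule summable_norm[OF norm_summable])
      also have "\<dots> \<le> (\<Sum>n. norm u * norm (b n))"
        by (rule suminf_le[OF bound norm_summable summable_mult[OF b]])
      finally show ?thesis by (simp add: suminf_mult[OF b])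
    qed
  qed
qed

lemma bcontfun_suminf_unit:
  assumes "\<And>n. Q n = Q m \<Longrightarrow> n = m"
  shows "(\<Sum>n. apply_bcontfun (unit_bcontfun (Q m)) (Q n) * b n) = b m"
proof -
  have "(\<lambda>n. apply_bcontfun (unit_bcontfun (Q m)) (Q n) * b n) = (\<lambda>n. if n = m then b n else 0)"
    using assms by auto
  then show ?thesis using sums_single[of m b] by (simp add: sums_iff)
qed

lemma summable_powers_if_weighted_summable:
  fixes a :: "nat \<Rightarrow> complex" and e :: "nat \<Rightarrow> nat"
  assumes "\<And>R. 1 \<le> R \<Longrightarrow> summable (\<lambda>n. norm (a n) * (real (e n) + 1) * R ^ e n)"
  shows "summable (\<lambda>n. a n * w ^ e n)"
proof (rule summable_comparison_test[OF _ assms[of "norm w + 1"]])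
  show "\<exists>N. \<forall>n\<ge>N. norm (a n * w ^ e n) \<le> norm (a n) * (real (e n) + 1) * (norm w + 1) ^ e n"
  proof (intro exI allI impI)
    fix n
    have "norm w ^ e n \<le> (norm w + 1) ^ e n" by (intro power_mono) auto
    also have "\<dots> \<le> (real (e n) + 1) * (norm w + 1) ^ e n"
      using mult_nonneg_nonneg[of "real (e n)" "(norm w + 1) ^ e n"] by (simp add: distrib_right)
    finally have "norm w ^ e n \<le> (real (e n) + 1) * (norm w + 1) ^ e n" .
    then show "norm (a n * w ^ e n) \<le> norm (a n) * (real (e n) + 1) * (norm w + 1) ^ e n"
      by (simp add: norm_mult norm_power mult.assoc mult_left_mono)
  qed
qed simp

lemma has_field_derivative_suminf_powers:
  fixes a :: "nat \<Rightarrow> complex" and e :: "nat \<Rightarrow> nat"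
  assumes summable: "\<And>R. 1 \<le> R \<Longrightarrow> summable (\<lambda>n. norm (a n) * (real (e n) + 1) * R ^ e n)"
  shows "((\<lambda>w. \<Sum>n. a n * w ^ Suc (e n)) has_field_derivative
          (\<Sum>n. a n * of_nat (Suc (e n)) * z ^ e n)) (at z)"
proof -
  define R where "R = norm z + 1"
  have "1 \<le> R" unfolding R_def by simp
  have bound: "norm (a n * of_nat (Suc (e n)) * w ^ e n) \<le> norm (a n) * (real (e n) + 1) * R ^ e n"
    if "w \<in> ball 0 R" for n w
  proof -
    have "norm w ^ e n \<le> R ^ e n" using that by (intro power_mono) auto
    moreover have "norm (of_nat (Suc (e n)) :: complex) = real (e n) + 1" by (simp only: norm_of_nat)
    ultimately show ?thesis by (simp only: norm_mult norm_power) (simp add: mult_left_mono)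
  qed
  have "uniformly_convergent_on (ball 0 R) (\<lambda>n w. \<Sum>i<n. a i * of_nat (Suc (e i)) * w ^ e i)"
    by (rule Weierstrass_m_test'[OF bound summable[OF \<open>1 \<le> R\<close>]])
  moreover have "z \<in> interior (ball 0 R)" unfolding R_def by simp
  moreover have "0 \<in> ball (0::complex) R" using \<open>1 \<le> R\<close> by simp
  moreover have "((\<lambda>w. a n * w ^ Suc (e n)) has_field_derivative a n * of_nat (Suc (e n)) * w ^ e n)
      (at w within ball 0 R)" for n w
    by (rule DERIV_cong[OF DERIV_cmult[OF DERIV_power[OF DERIV_ident]]]) simp
  ultimately show ?thesis
    by (intro has_field_derivative_series'(2)[of "ball 0 R" _ _ 0]) auto
qed

definition phi_deriv_coeff :: "real \<Rightarrow> (nat \<Rightarrow> nat) \<Rightarrow> complex \<Rightarrow> nat \<Rightarrow> complex" where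
  "phi_deriv_coeff \<mu> q' z n = (1 - cis (2 * pi * real (q' n) * \<mu>)) * of_nat (Suc (q' n)) * z ^ q' n"

lemma deriv_phi:
  fixes q' :: "nat \<Rightarrow> nat" and u :: linfty
  assumes summable:
    "\<And>R. 1 \<le> R \<Longrightarrow> summable (\<lambda>n. norm (1 - cis (2 * pi * real (q' n) * \<mu>)) * (real (q' n) + 1) * R ^ q' n)"
  shows "deriv (phi \<mu> q' u) z = cis (2 * pi * \<mu>) *
    (\<Sum>n. apply_bcontfun u (q' n) * phi_deriv_coeff \<mu> q' z n)"
proof -
  define a where "a n = apply_bcontfun u (q' n) * (1 - cis (2 * pi * real (q' n) * \<mu>))" for n
  have a_summable: "summable (\<lambda>n. norm (a n) * (real (q' n) + 1) * R ^ q' n)" if "1 \<le> R" for R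
  proof (rule summable_comparison_test[OF _ summable_mult[OF summable[OF that], of "norm u"]])
    have "norm (a n) \<le> norm u * norm (1 - cis (2 * pi * real (q' n) * \<mu>))" for n
      unfolding a_def norm_mult by (intro mult_right_mono norm_bounded) simp
    then show "\<exists>N. \<forall>n\<ge>N. norm (norm (a n) * (real (q' n) + 1) * R ^ q' n)
        \<le> norm u * (norm (1 - cis (2 * pi * real (q' n) * \<mu>)) * (real (q' n) + 1) * R ^ q' n)"
      using that by (auto simp: mult.assoc intro!: mult_right_mono)
  qed
  have "phi \<mu> q' u = (\<lambda>w. cis (2 * pi * \<mu>) * (\<Sum>n. a n * w ^ Suc (q' n)))"
  proof
    fix w
    have "w * (\<Sum>n. a n * w ^ q' n) = (\<Sum>n. a n * w ^ Suc (q' n))"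
      using suminf_mult[OF summable_powers_if_weighted_summable[OF a_summable], of w]
      by (simp add: algebra_simps)
    then show "phi \<mu> q' u w = cis (2 * pi * \<mu>) * (\<Sum>n. a n * w ^ Suc (q' n))"
      by (simp add: phi_def a_def mult.assoc)
  qed
  then show ?thesis
    using DERIV_imp_deriv[OF DERIV_cmult[OF has_field_derivative_suminf_powers[OF a_summable]]]
    by (simp add: a_def phi_deriv_coeff_def mult.assoc)
qed

lemma norm_one_minus_cis_cf_q_le:
  assumes "\<theta> \<notin> \<rat>"
  shows "norm (1 - cis (2 * pi * real (cf_q \<theta> n) * (real N * \<theta>))) \<le> 2 * pi * real N / real (cf_q \<theta> (Suc n))"
proof -
  let ?q = "real (cf_q \<theta> n)"
  obtain p :: int where p: "\<bar>?q * \<theta> - of_int p\<bar> \<le> 1 / real (cf_q \<theta> (Suc n))"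
    using cf_q_approx[OF assms] by blast
  have "cis (2 * pi * ?q * (real N * \<theta>))
      = cis (2 * pi * (of_int (int N * p) + real N * (?q * \<theta> - of_int p)))"
    by (simp add: algebra_simps)
  also have "\<dots> = cis (2 * pi * (real N * (?q * \<theta> - of_int p)))"
    by (rule cis_2pi_add_Ints) simp
  finally have "norm (1 - cis (2 * pi * ?q * (real N * \<theta>))) \<le> 2 * pi * real N * \<bar>?q * \<theta> - of_int p\<bar>"
    using norm_one_minus_cis_le[of "2 * pi * (real N * (?q * \<theta> - of_int p))"] by (simp add: abs_mult)
  also have "\<dots> \<le> 2 * pi * real N * (1 / real (cf_q \<theta> (Suc n)))"
    using p by (intro mult_left_mono) auto
  finally show ?thesis by simp
qed

lemma eventually_exp_le_cf_q_Suc: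
  assumes irr: "\<theta> \<notin> \<rat>"
    and growth: "filterlim (\<lambda>n. ln (real (cf_q \<theta> (Suc n))) / real (cf_q \<theta> n)) at_top sequentially"
  shows "eventually (\<lambda>n. exp (C * real (cf_q \<theta> n)) \<le> real (cf_q \<theta> (Suc n))) sequentially"
  using growth unfolding filterlim_at_top
proof (rule eventually_mono[OF spec[of _ C]])
  fix n assume "C \<le> ln (real (cf_q \<theta> (Suc n))) / real (cf_q \<theta> n)"
  moreover have "0 < real (cf_q \<theta> n)" "0 < real (cf_q \<theta> (Suc n))"
    using cf_q_pos[OF irr] by (auto simp: Suc_le_eq)
  ultimately have "C * real (cf_q \<theta> n) \<le> ln (real (cf_q \<theta> (Suc n)))"
    by (simp add: field_simps)
  then show "exp (C * real (cf_q \<theta> n)) \<le> real (cf_q \<theta> (Suc n))"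
    using \<open>0 < real (cf_q \<theta> (Suc n))\<close> by (metis exp_le_cancel_iff exp_ln)
qed

context
  fixes \<theta> :: real and k :: "nat \<Rightarrow> nat"
  assumes irr: "\<theta> \<notin> \<rat>"
    and growth: "filterlim (\<lambda>n. ln (real (cf_q \<theta> (Suc n))) / real (cf_q \<theta> n)) at_top sequentially"
    and sub: "strict_mono k"
begin

(* Eventually q_{k_n + 1} >= exp ((ln R + 2) q) with q = q_{k_n} >= n, so the n-th term is at most
   2 pi N (q + 1) exp (-2 q) <= 2 pi N exp (-n). *)

lemma summable_cf_lacunary:
  assumes R: "1 \<le> R"
  shows "summable (\<lambda>n. norm (1 - cis (2 * pi * real (cf_q \<theta> (k n)) * (real N * \<theta>)))
    * (real (cf_q \<theta> (k n)) + 1) * R ^ cf_q \<theta> (k n))"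
proof (rule summable_comparison_test_ev)
  show "summable (\<lambda>n. 2 * pi * real N * exp (-1) ^ n)"
    by (intro summable_mult summable_geometric) simp
  have "eventually (\<lambda>n. exp ((ln R + 2) * real (cf_q \<theta> (k n))) \<le> real (cf_q \<theta> (Suc (k n)))) sequentially"
    using eventually_exp_le_cf_q_Suc[OF irr growth] filterlim_subseq[OF sub]
    by (rule eventually_compose_filterlim)
  then show "eventually (\<lambda>n. norm (norm (1 - cis (2 * pi * real (cf_q \<theta> (k n)) * (real N * \<theta>)))
      * (real (cf_q \<theta> (k n)) + 1) * R ^ cf_q \<theta> (k n)) \<le> 2 * pi * real N * exp (-1) ^ n) sequentially"
  proof (rule eventually_mono)
    fix n
    define q where "q = real (cf_q \<theta> (k n))"
    define C where "C = 2 * pi * real N"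
    let ?A = "norm (1 - cis (2 * pi * q * (real N * \<theta>)))"
    assume "exp ((ln R + 2) * real (cf_q \<theta> (k n))) \<le> real (cf_q \<theta> (Suc (k n)))"
    then have "C / real (cf_q \<theta> (Suc (k n))) \<le> C / exp ((ln R + 2) * q)"
      using cf_q_pos[OF irr, of "Suc (k n)"] unfolding q_def C_def by (intro divide_left_mono) auto
    then have A: "?A \<le> C / exp ((ln R + 2) * q)"
      using norm_one_minus_cis_cf_q_le[OF irr, of "k n" N] unfolding q_def C_def by linarith
    have R_pow: "R ^ cf_q \<theta> (k n) = exp (q * ln R)"
      using R by (simp add: q_def exp_of_nat_mult)
    have exp_split: "exp ((ln R + 2) * q) = exp (q * ln R) * exp q * exp q"
      by (simp add: algebra_simps flip: exp_add)
    have "q + 1 \<le> exp q" using exp_ge_add_one_self[of q] by linarith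
    have "real n \<le> q"
      using cf_q_ge[OF irr, of "k n"] seq_suble[OF sub, of n] unfolding q_def by linarith
    have "?A * (q + 1) * R ^ cf_q \<theta> (k n) \<le> C / exp ((ln R + 2) * q) * (q + 1) * exp (q * ln R)"
      unfolding R_pow using A by (intro mult_right_mono) (auto simp: q_def)
    also have "\<dots> = C * (q + 1) / (exp q * exp q)"
      by (simp add: exp_split)
    also have "\<dots> \<le> C * exp q / (exp q * exp q)"
      using \<open>q + 1 \<le> exp q\<close> by (intro divide_right_mono mult_left_mono) (auto simp: C_def)
    also have "\<dots> = C * exp (- q)" by (simp add: exp_minus field_simps)
    also have "\<dots> \<le> C * exp (- real n)" using \<open>real n \<le> q\<close> by (intro mult_left_mono) (auto simp: C_def)
    finally show "norm (?A * (q + 1) * R ^ cf_q \<theta> (k n)) \<le> 2 * pi * real N * exp (-1) ^ n"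
      using R by (simp add: C_def q_def abs_mult exp_of_nat_mult[symmetric])
  qed
qed

lemma deriv_phi_cf:
  "deriv (phi (real N * \<theta>) (\<lambda>n. cf_q \<theta> (k n)) u) z = cis (2 * pi * (real N * \<theta>)) *
    (\<Sum>n. apply_bcontfun u (cf_q \<theta> (k n)) * phi_deriv_coeff (real N * \<theta>) (\<lambda>n. cf_q \<theta> (k n)) z n)"
  by (rule deriv_phi[OF summable_cf_lacunary])

lemma summable_norm_phi_deriv_coeff_cf:
  assumes "1 \<le> norm z"
  shows "summable (\<lambda>n. norm (phi_deriv_coeff (real N * \<theta>) (\<lambda>n. cf_q \<theta> (k n)) z n))"
proof -
  have "norm (phi_deriv_coeff (real N * \<theta>) (\<lambda>n. cf_q \<theta> (k n)) z n)
      = norm (1 - cis (2 * pi * real (cf_q \<theta> (k n)) * (real N * \<theta>)))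
        * (real (cf_q \<theta> (k n)) + 1) * norm z ^ cf_q \<theta> (k n)" for n
    unfolding phi_deriv_coeff_def norm_mult norm_power by (simp only: norm_of_nat) simp
  then show ?thesis using summable_cf_lacunary[OF assms] by simp
qed

lemma bounded_linear_deriv_phi_cf:
  assumes "1 \<le> norm z"
  shows "bounded_linear (\<lambda>u. deriv (phi (real N * \<theta>) (\<lambda>n. cf_q \<theta> (k n)) u) z)"
  unfolding deriv_phi_cf
  by (rule bounded_linear_compose[OF bounded_linear_mult_right
        bounded_linear_bcontfun_suminf[OF summable_norm_phi_deriv_coeff_cf[OF assms]]])

lemma deriv_phi_cf_unbounded:
  assumes "1 \<le> norm z"
  shows "\<exists>N x. norm x \<le> 1 \<and> T < norm (deriv (phi (real N * \<theta>) (\<lambda>n. cf_q \<theta> (k n)) x) z)"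
proof -
  define m where "m = 2 + nat \<lceil>T\<rceil>"
  define q where "q = cf_q \<theta> (k m)"
  have "T < real m" unfolding m_def by linarith
  also have "\<dots> \<le> real q"
    using cf_q_ge[OF irr, of "k m"] seq_suble[OF sub, of m] unfolding q_def by simp
  finally have "T < real q + 1" by simp
  have "real q * \<theta> \<notin> \<int>"
  proof
    assume "real q * \<theta> \<in> \<int>"
    then have "real q * \<theta> / real q \<in> \<rat>" by (intro Rats_divide) (use Ints_subset_Rats in auto)
    moreover have "real q * \<theta> / real q = \<theta>" using cf_q_pos[OF irr, of "k m"] by (simp add: q_def)
    ultimately show False using irr by simp
  qed
  then obtain N :: nat where N: "1 \<le> norm (1 - cis (2 * pi * (real N * (real q * \<theta>))))"
    using exists_multiple_norm_one_minus_cis_ge by blast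
  have inj: "n = m" if "cf_q \<theta> (k n) = cf_q \<theta> (k m)" for n
    using cf_q_inj[OF irr _ that] seq_suble[OF sub, of m] strict_mono_eq[OF sub]
    unfolding m_def by auto
  have "real q + 1 \<le> norm (phi_deriv_coeff (real N * \<theta>) (\<lambda>n. cf_q \<theta> (k n)) z m)"
  proof -
    have "1 * (real q + 1) * 1 \<le> norm (1 - cis (2 * pi * (real N * (real q * \<theta>)))) * (real q + 1) * norm z ^ q"
      using N assms by (intro mult_mono) (auto simp: one_le_power)
    then show ?thesis
      unfolding phi_deriv_coeff_def norm_mult norm_power q_def by (simp only: norm_of_nat) (simp add: algebra_simps)
  qed
  moreover have "deriv (phi (real N * \<theta>) (\<lambda>n. cf_q \<theta> (k n)) (unit_bcontfun q)) z
      = cis (2 * pi * (real N * \<theta>)) * phi_deriv_coeff (real N * \<theta>) (\<lambda>n. cf_q \<theta> (k n)) z m"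
    by (simp only: deriv_phi_cf q_def bcontfun_suminf_unit[of "\<lambda>n. cf_q \<theta> (k n)" m, OF inj])
  ultimately have "T < norm (deriv (phi (real N * \<theta>) (\<lambda>n. cf_q \<theta> (k n)) (unit_bcontfun q)) z)"
    using \<open>T < real q + 1\<close> by (simp add: norm_mult)
  then show ?thesis using norm_unit_bcontfun_le by blast
qed

end

theorem lemma2p6:
  fixes \<theta> :: real and k :: "nat \<Rightarrow> nat" and z :: complex
  assumes irr: "\<theta> \<notin> \<rat>"
    and growth: "filterlim (\<lambda>n. ln (real (cf_q \<theta> (Suc n))) / real (cf_q \<theta> n)) at_top sequentially"
    and sub: "strict_mono k"
    and z: "norm z > 1"
  shows "\<exists>E :: linfty set. gdelta_in euclidean E \<and> closure E = UNIV \<and>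
           (\<forall>u\<in>E. \<forall>B::real. \<exists>N::nat.
              norm (deriv (phi (real N * \<theta>) (\<lambda>n. cf_q \<theta> (k n)) u) z) > B)"
proof -
  let ?f = "\<lambda>N u. deriv (phi (real N * \<theta>) (\<lambda>n. cf_q \<theta> (k n)) u) z"
  have "1 \<le> norm z" using z by simp
  then have "gdelta_in euclidean {u. \<forall>B. \<exists>N. B < norm (?f N u)}
      \<and> closure {u. \<forall>B. \<exists>N. B < norm (?f N u)} = UNIV"
    using bounded_linear_sequence_unbounded_dense_gdelta[OF complete_UNIV_bcontfun, of ?f]
      bounded_linear_deriv_phi_cf[OF irr growth sub] deriv_phi_cf_unbounded[OF irr growth sub]
    by blast
  then show ?thesis by blast
qed

end
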